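(* Let $n\geq 2$, $\alpha>0$, and $k\in\mathbb{N}\setminus\{0\}$. Let $\mathbb{D}_k:=\{2^{-j}:0\leq j\leq k\}$ and $$\mathscr{R}_k:=\Big\{[0,s_1]\times\cdots\times[0,s_{n-1}]\times\Big[0,\frac{\alpha}{s_1\cdots s_{n-1}}\Big] : s_1,\dots,s_{n-1}\in\mathbb{D}_k\Big\}.$$ Then $\big|\bigcup_{R\in\mathscr{R}_k}R\big|\geq\frac{1}{3\cdot 2^{n-2}}\,k^{n-1}\alpha$.
   Context: $|\cdot|$ denotes Lebesgue measure on $\mathbb{R}^n$. *)

theory Defs
  imports "HOL-Analysis.Analysis"
begin

definition dyadics :: "nat \<Rightarrow> real set" where
  "dyadics k = {1 / 2 ^ j | j. j \<le> k}"

text \<open>The box [0,s_1] x ... x [0, alpha/(prod of the other s_i)] in real^'n,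
  where the coordinate l plays the role of the last coordinate.\<close>
definition rect :: "'n::finite \<Rightarrow> real \<Rightarrow> ('n \<Rightarrow> real) \<Rightarrow> (real ^ 'n) set" where
  "rect l \<alpha> s = cbox 0 (\<chi> i. if i = l then \<alpha> / (\<Prod>j\<in>UNIV - {l}. s j) else s i)"

text \<open>The family R_k: s ranges over side lengths in D_k on all coordinates other
  than l (the value s l is irrelevant and fixed to 1).\<close>
definition rects :: "'n::finite \<Rightarrow> real \<Rightarrow> nat \<Rightarrow> (real ^ 'n) set set" where
  "rects l \<alpha> k = {rect l \<alpha> s | s. s l = 1 \<and> (\<forall>j. j \<noteq> l \<longrightarrow> s j \<in> dyadics k)}"

end

theory Submission
  imports Defs
begin

text \<open>Cut each of the coordinates other than l at the dyadic points, into the shells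
  (2^-(t+1), 2^-t] for t < k and (0, 2^-k]. For a choice g of one shell per coordinate,
  the product of these shells with [0, \<alpha> 2^(\<Sum> g)] lies in the rectangle of R_k whose sides
  are the outer endpoints 2^-(g i). These boxes are pairwise disjoint; the box for g has
  volume \<alpha> times the product of the relative widths 2^(g i) |shell (g i)|, which are 1/2
  except for the innermost shell (width 1). Summing over all g factorises into
  \<alpha> (k/2 + 1)^(n-1) \<ge> \<alpha> (k/2)^(n-1).\<close>

lemma measure_lebesgue_box_cart:
  fixes a b :: "real ^ 'n::finite"
  assumes "\<And>i. a $ i \<le> b $ i"
  shows "measure lebesgue (box a b) = (\<Prod>i\<in>UNIV. b $ i - a $ i)"
proof -
  have "measure lebesgue (box a b) = measure lborel (cbox a b)"
    using assms by (simp add: measure_completion measure_lborel_box_eq measure_lborel_cbox_eq)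
  also have "\<dots> = (\<Prod>i\<in>UNIV. b $ i - a $ i)"
  proof (rule content_cbox_cart)
    have "a \<in> cbox a b"
      using assms by (simp add: mem_box_cart)
    then show "cbox a b \<noteq> {}" by blast
  qed
  finally show ?thesis .
qed

lemma finite_dyadics: "finite (dyadics k)"
  unfolding dyadics_def by (rule finite_subset[of _ "(\<lambda>j. 1 / 2 ^ j) ` {..k}"]) auto

lemma finite_rects: "finite (rects l \<alpha> k)"
proof -
  let ?S = "{s. s l = 1 \<and> (\<forall>j. j \<noteq> l \<longrightarrow> s j \<in> dyadics k)}"
  have "?S \<subseteq> PiE UNIV (\<lambda>_. insert 1 (dyadics k))"
    by (auto simp: PiE_def)
  then have "finite ?S"
    by (rule finite_subset) (auto intro: finite_PiE finite_dyadics)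
  moreover have "rects l \<alpha> k = rect l \<alpha> ` ?S"
    unfolding rects_def by auto
  ultimately show ?thesis by simp
qed

lemma Union_rects_lmeasurable: "\<Union> (rects l \<alpha> k) \<in> lmeasurable"
  using finite_rects[of l \<alpha> k]
  by (intro fmeasurable.finite_Union) (auto simp: rects_def rect_def)

definition shell_lower :: "nat \<Rightarrow> nat \<Rightarrow> real" where
  "shell_lower k t = (if t < k then 1 / 2 ^ Suc t else 0)"

lemma shell_lower_nonneg: "0 \<le> shell_lower k t"
  by (simp add: shell_lower_def)

lemma shell_lower_le: "shell_lower k t \<le> 1 / 2 ^ t"
  by (simp add: shell_lower_def divide_simps)

lemma shell_upper_le_shell_lower:
  assumes "u < v" "v \<le> k"
  shows "1 / 2 ^ v \<le> shell_lower k u"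
proof -
  have "(2::real) ^ Suc u \<le> 2 ^ v"
    using assms by (intro power_increasing) auto
  then show ?thesis
    using assms by (simp add: shell_lower_def divide_simps)
qed

definition shell_weight :: "nat \<Rightarrow> nat \<Rightarrow> real" where
  "shell_weight k t = (if t < k then 1 / 2 else 1)"

lemma shell_width: "1 / 2 ^ t - shell_lower k t = shell_weight k t / 2 ^ t"
  by (simp add: shell_lower_def shell_weight_def field_simps)

lemma sum_shell_weight: "(\<Sum>t\<le>k. shell_weight k t) = real k / 2 + 1"
proof -
  have "(\<Sum>t\<le>k. shell_weight k t) = (\<Sum>t<k. 1 / 2) + shell_weight k k"
    by (simp add: lessThan_Suc_atMost[symmetric] shell_weight_def)
  then show ?thesis
    by (simp add: shell_weight_def)
qed

definition packing_box :: "'n::finite \<Rightarrow> real \<Rightarrow> nat \<Rightarrow> ('n \<Rightarrow> nat) \<Rightarrow> (real ^ 'n) set" where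
  "packing_box l \<alpha> k g =
     box (\<chi> i. if i = l then 0 else shell_lower k (g i))
         (\<chi> i. if i = l then \<alpha> * 2 ^ (\<Sum>j\<in>UNIV - {l}. g j) else 1 / 2 ^ g i)"

lemma packing_box_lmeasurable: "packing_box l \<alpha> k g \<in> lmeasurable"
  by (simp add: packing_box_def)

lemma packing_box_component_bounds:
  assumes "x \<in> packing_box l \<alpha> k g"
  shows "(if i = l then 0 else shell_lower k (g i)) < x $ i \<and>
         x $ i < (if i = l then \<alpha> * 2 ^ (\<Sum>j\<in>UNIV - {l}. g j) else 1 / 2 ^ g i)"
  using assms unfolding packing_box_def mem_box_cart by (simp del: if_image_distrib)

lemma packing_box_subset_rect:
  assumes g: "g \<in> PiE (UNIV - {l}) (\<lambda>_. {..k})"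
  shows "packing_box l \<alpha> k g \<subseteq> \<Union> (rects l \<alpha> k)"
proof
  fix x assume x: "x \<in> packing_box l \<alpha> k g"
  define s :: "_ \<Rightarrow> real" where "s i = (if i = l then 1 else 1 / 2 ^ g i)" for i
  have "rect l \<alpha> s \<in> rects l \<alpha> k"
    unfolding rects_def
  proof (intro CollectI exI conjI allI impI)
    show "s l = 1" by (simp add: s_def)
    fix j assume "j \<noteq> l"
    with g show "s j \<in> dyadics k"
      by (auto simp: s_def dyadics_def)
  qed simp
  moreover have quotient: "\<alpha> / (\<Prod>j\<in>UNIV - {l}. s j) = \<alpha> * 2 ^ (\<Sum>j\<in>UNIV - {l}. g j)"
  proof -
    have "(\<Prod>j\<in>UNIV - {l}. s j) = 1 / (\<Prod>j\<in>UNIV - {l}. 2 ^ g j)"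
      by (simp add: s_def prod_dividef)
    then show ?thesis
      by (simp add: power_sum)
  qed
  moreover have "x \<in> rect l \<alpha> s"
    unfolding rect_def mem_box_cart
  proof
    fix i
    show "0 $ i \<le> x $ i \<and> x $ i \<le> (\<chi> i. if i = l then \<alpha> / (\<Prod>j\<in>UNIV - {l}. s j) else s i) $ i"
      using packing_box_component_bounds[OF x, of i] shell_lower_nonneg[of k "g i"] quotient
      by (auto simp: s_def split: if_splits)
  qed
  ultimately show "x \<in> \<Union> (rects l \<alpha> k)" by blast
qed

lemma disjoint_family_on_packing_box:
  "disjoint_family_on (packing_box l \<alpha> k) (PiE (UNIV - {l}) (\<lambda>_. {..k}))"
  unfolding disjoint_family_on_def
proof (intro ballI impI)
  fix g h assume g: "g \<in> PiE (UNIV - {l}) (\<lambda>_. {..k})"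
    and h: "h \<in> PiE (UNIV - {l}) (\<lambda>_. {..k})" and "g \<noteq> h"
  then obtain i where gh: "g i \<noteq> h i" by blast
  have i: "i \<noteq> l"
    using gh PiE_arb[OF g] PiE_arb[OF h] by auto
  with g h have "g i \<le> k" "h i \<le> k" by auto
  with gh have "1 / 2 ^ g i \<le> shell_lower k (h i) \<or> 1 / 2 ^ h i \<le> shell_lower k (g i)"
    using shell_upper_le_shell_lower by (meson linorder_neqE_nat)
  then show "packing_box l \<alpha> k g \<inter> packing_box l \<alpha> k h = {}"
    using packing_box_component_bounds[of _ l \<alpha> k _ i] i by (smt (verit) disjoint_iff)
qed

lemma measure_packing_box:
  assumes "\<alpha> \<ge> 0"
  shows "measure lebesgue (packing_box l \<alpha> k g) = \<alpha> * (\<Prod>i\<in>UNIV - {l}. shell_weight k (g i))"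
proof -
  have "measure lebesgue (packing_box l \<alpha> k g)
          = \<alpha> * 2 ^ (\<Sum>j\<in>UNIV - {l}. g j) * (\<Prod>i\<in>UNIV - {l}. shell_weight k (g i) / 2 ^ g i)"
    unfolding packing_box_def
    using assms shell_lower_le
    by (subst measure_lebesgue_box_cart) (simp_all add: prod.remove[of UNIV l] shell_width)
  also have "\<dots> = \<alpha> * (\<Prod>i\<in>UNIV - {l}. shell_weight k (g i))"
    by (simp add: power_sum prod_dividef)
  finally show ?thesis .
qed

lemma measure_Union_packing_boxes:
  fixes l :: "'n::finite"
  assumes "\<alpha> \<ge> 0"
  shows "measure lebesgue (\<Union>g\<in>PiE (UNIV - {l}) (\<lambda>_. {..k}). packing_box l \<alpha> k g)
           = \<alpha> * (real k / 2 + 1) ^ (CARD('n) - 1)"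
proof -
  let ?J = "PiE (UNIV - {l}) (\<lambda>_. {..k})"
  have "measure lebesgue (\<Union>g\<in>?J. packing_box l \<alpha> k g)
          = (\<Sum>g\<in>?J. measure lebesgue (packing_box l \<alpha> k g))"
  proof (rule measure_finite_Union[OF _ _ disjoint_family_on_packing_box])
    show "finite ?J" by (simp add: finite_PiE)
    show "packing_box l \<alpha> k ` ?J \<subseteq> sets lebesgue"
      using packing_box_lmeasurable by blast
    show "emeasure lebesgue (packing_box l \<alpha> k g) \<noteq> \<infinity>" for g
      using fmeasurableD2[OF packing_box_lmeasurable] by (simp only: infinity_ennreal_def)
  qed
  also have "\<dots> = \<alpha> * (\<Sum>g\<in>?J. \<Prod>i\<in>UNIV - {l}. shell_weight k (g i))"
    using assms by (simp add: measure_packing_box sum_distrib_left)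
  also have "(\<Sum>g\<in>?J. \<Prod>i\<in>UNIV - {l}. shell_weight k (g i))
               = (\<Prod>i\<in>UNIV - {l}. \<Sum>t\<le>k. shell_weight k t)"
    by (rule prod_sum_PiE[symmetric]) auto
  also have "\<dots> = (real k / 2 + 1) ^ (CARD('n) - 1)"
    by (simp add: sum_shell_weight card_Diff_singleton)
  finally show ?thesis .
qed

lemma measure_Union_rects_ge:
  fixes l :: "'n::finite"
  assumes "\<alpha> \<ge> 0"
  shows "\<alpha> * (real k / 2 + 1) ^ (CARD('n) - 1) \<le> measure lebesgue (\<Union> (rects l \<alpha> k))"
proof -
  let ?J = "PiE (UNIV - {l}) (\<lambda>_. {..k})"
  have "(\<Union>g\<in>?J. packing_box l \<alpha> k g) \<in> lmeasurable"
    by (intro fmeasurable.finite_UN finite_PiE packing_box_lmeasurable) auto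
  moreover have "(\<Union>g\<in>?J. packing_box l \<alpha> k g) \<subseteq> \<Union> (rects l \<alpha> k)"
    using packing_box_subset_rect by (rule UN_least)
  ultimately have "measure lebesgue (\<Union>g\<in>?J. packing_box l \<alpha> k g)
                     \<le> measure lebesgue (\<Union> (rects l \<alpha> k))"
    by (intro measure_mono_fmeasurable Union_rects_lmeasurable) (auto simp: fmeasurable_def)
  then show ?thesis
    by (simp add: measure_Union_packing_boxes[OF assms])
qed

lemma power_div_le_half_plus_one_power:
  fixes x :: real
  assumes "x \<ge> 0"
  shows "x ^ m / (3 * 2 ^ (m - 1)) \<le> (x / 2 + 1) ^ m"
proof -
  have "(2::real) ^ m \<le> 3 * 2 ^ (m - 1)"
    by (cases m) auto
  then have "x ^ m / (3 * 2 ^ (m - 1)) \<le> x ^ m / 2 ^ m"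
    using assms by (intro divide_left_mono) auto
  also have "\<dots> \<le> (x / 2 + 1) ^ m"
    using assms by (simp add: power_divide[symmetric] power_mono)
  finally show ?thesis .
qed

theorem mainTheorem2:
  fixes l :: "'n::finite" and \<alpha> :: real and k :: nat
  assumes "CARD('n) \<ge> 2" and "\<alpha> > 0" and "k \<ge> 1"
  shows "measure lebesgue (\<Union> (rects l \<alpha> k))
           \<ge> 1 / (3 * 2 ^ (CARD('n) - 2)) * real k ^ (CARD('n) - 1) * \<alpha>"
proof -
  have "CARD('n) - 2 = (CARD('n) - 1) - 1" by simp
  then have "1 / (3 * 2 ^ (CARD('n) - 2)) * real k ^ (CARD('n) - 1) * \<alpha>
               \<le> (real k / 2 + 1) ^ (CARD('n) - 1) * \<alpha>"
    using mult_right_mono[OF power_div_le_half_plus_one_power[of "real k" "CARD('n) - 1"]]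
      \<open>\<alpha> > 0\<close>
    by simp
  also have "\<dots> \<le> measure lebesgue (\<Union> (rects l \<alpha> k))"
    using measure_Union_rects_ge[of \<alpha> k l] \<open>\<alpha> > 0\<close> by (simp add: mult.commute)
  finally show ?thesis .
qed

end
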